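(* Let $\mathcal{T}\in\mathbb{K}^{R\times R\times K}$ be slice mix invertible, let $\mathbf{U}\in\mathbb{K}^{K\times K}$ be invertible, and set $\mathcal{S}=\mathcal{T}\cdot_3\mathbf{U}$ with frontal slices $\mathbf{S}_k=\mathcal{S}(:,:,k)$. If $\mathcal{T}$ has a JGE value of algebraic multiplicity $m$, then for any $i\neq j$ the subpencil $(\mathbf{S}_i,\mathbf{S}_j)$ (viewed as a tensor in $\mathbb{K}^{R\times R\times 2}$) has a JGE value of algebraic multiplicity at least $m$.
   Context: $\mathbb{K}$ denotes $\mathbb{R}$ or $\mathbb{C}$. $\mathcal{T}\cdot_3\mathbf{U}$ is defined by $(\mathcal{T}\cdot_3\mathbf{U})(a,b,:)=\mathbf{U}\,\mathcal{T}(a,b,:)$, i.e. $\mathbf{S}_k=\sum_l U_{kl}\mathbf{T}_l$. For $\mathcal{X}\in\mathbb{K}^{R\times R\times L}$ with slices $\mathbf{X}_k$: slice mix invertible means some linear combination of slices is invertible; $p_{\mathcal{X}}(\boldsymbol{\gamma})=\det(\sum_k\gamma_k\mathbf{X}_k)$; for nonzero $\boldsymbol{\lambda}\in\mathbb{K}^L$ the algebraic multiplicity of $\mathrm{span}(\boldsymbol{\lambda})$ is the largest $m$ with $(\sum_k\lambda_k\gamma_k)^m\mid p_{\mathcal{X}}$, and $\mathrm{span}(\boldsymbol{\lambda})$ is a JGE value (of that algebraic multiplicity) when this is positive. *)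

theory Defs
  imports "HOL-Analysis.Analysis"
begin

text \<open>A tensor in K^{R x R x L} is represented by its frontal slices, a function
  from a finite index type 'l (of cardinality L) to R x R matrices.\<close>

definition slice_mix :: "('l::finite \<Rightarrow> 'a::comm_ring_1^'r^'r) \<Rightarrow> ('l \<Rightarrow> 'a) \<Rightarrow> 'a^'r^'r" where
  "slice_mix X \<gamma> = (\<chi> a b. \<Sum>k\<in>UNIV. \<gamma> k * X k $ a $ b)"

definition slice_mix_invertible :: "('l::finite \<Rightarrow> 'a::comm_ring_1^'r::finite^'r) \<Rightarrow> bool" where
  "slice_mix_invertible X \<longleftrightarrow> (\<exists>\<gamma>. invertible (slice_mix X \<gamma>))"

definition pencil_det :: "('l::finite \<Rightarrow> 'a::comm_ring_1^'r::finite^'r) \<Rightarrow> ('l \<Rightarrow> 'a) \<Rightarrow> 'a" where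
  "pencil_det X \<gamma> = det (slice_mix X \<gamma>)"

definition mpoly_fun :: "(('l::finite \<Rightarrow> 'a::comm_ring_1) \<Rightarrow> 'a) \<Rightarrow> bool" where
  "mpoly_fun q \<longleftrightarrow> (\<exists>c :: ('l \<Rightarrow> nat) \<Rightarrow> 'a. finite {\<alpha>. c \<alpha> \<noteq> 0} \<and>
     (\<forall>\<gamma>. q \<gamma> = (\<Sum>\<alpha>\<in>{\<alpha>. c \<alpha> \<noteq> 0}. c \<alpha> * (\<Prod>k\<in>UNIV. \<gamma> k ^ \<alpha> k))))"

definition lin_pow_dvd :: "('l::finite \<Rightarrow> 'a::comm_ring_1^'r::finite^'r) \<Rightarrow> ('l \<Rightarrow> 'a) \<Rightarrow> nat \<Rightarrow> bool" where
  "lin_pow_dvd X l m \<longleftrightarrow> (\<exists>q. mpoly_fun q \<and>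
     (\<forall>\<gamma>. pencil_det X \<gamma> = (\<Sum>k\<in>UNIV. l k * \<gamma> k) ^ m * q \<gamma>))"

definition alg_mult :: "('l::finite \<Rightarrow> 'a::comm_ring_1^'r::finite^'r) \<Rightarrow> ('l \<Rightarrow> 'a) \<Rightarrow> nat" where
  "alg_mult X l = (GREATEST m. lin_pow_dvd X l m)"

definition is_JGE_value :: "('l::finite \<Rightarrow> 'a::comm_ring_1^'r::finite^'r) \<Rightarrow> ('l \<Rightarrow> 'a) \<Rightarrow> bool" where
  "is_JGE_value X l \<longleftrightarrow> l \<noteq> (\<lambda>_. 0) \<and> alg_mult X l > 0"

definition mode3 :: "('l::finite \<Rightarrow> 'a::comm_ring_1^'r^'r) \<Rightarrow> 'a^'l^'l \<Rightarrow> ('l \<Rightarrow> 'a^'r^'r)" where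
  "mode3 T U = (\<lambda>k. \<chi> a b. \<Sum>l\<in>UNIV. U $ k $ l * T l $ a $ b)"

definition subpencil :: "('l \<Rightarrow> 'a^'r^'r) \<Rightarrow> 'l \<Rightarrow> 'l \<Rightarrow> (bool \<Rightarrow> 'a^'r^'r)" where
  "subpencil S i j = (\<lambda>b. if b then S i else S j)"

end

theory Submission
  imports Defs
begin

(* For the subpencil S of T *_3 U, the determinant of a slice mix is a linear change of
   variables of that of T: p_S(gamma) = p_T(M gamma), with M built from rows i and j of U.
   A factorisation p_T = l^m q therefore becomes p_S = (l o M)^m (q o M), and q o M is again
   a polynomial. If the linear form l o M vanishes, p_S is identically zero and every nonzero
   form divides it to any power. That the algebraic multiplicity m is attained at all (the
   GREATEST exists) follows from slice mix invertibility: p_T is homogeneous of degree R and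
   not identically zero, so no power of a linear form beyond R divides it. *)

definition monomial_fun :: "('l \<Rightarrow> nat) \<Rightarrow> ('l::finite \<Rightarrow> 'a::comm_ring_1) \<Rightarrow> 'a" where
  "monomial_fun \<alpha> \<gamma> = (\<Prod>k\<in>UNIV. \<gamma> k ^ \<alpha> k)"

lemma monomial_fun_add: "monomial_fun (\<lambda>k. \<alpha> k + \<beta> k) \<gamma> = monomial_fun \<alpha> \<gamma> * monomial_fun \<beta> \<gamma>"
  unfolding monomial_fun_def by (simp add: power_add prod.distrib)

lemma mpoly_fun_iff:
  "mpoly_fun q \<longleftrightarrow> (\<exists>A c. finite A \<and> (\<forall>\<gamma>. q \<gamma> = (\<Sum>\<alpha>\<in>A. c \<alpha> * monomial_fun \<alpha> \<gamma>)))"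
proof
  assume "mpoly_fun q"
  then show "\<exists>A c. finite A \<and> (\<forall>\<gamma>. q \<gamma> = (\<Sum>\<alpha>\<in>A. c \<alpha> * monomial_fun \<alpha> \<gamma>))"
    unfolding mpoly_fun_def monomial_fun_def by blast
next
  assume "\<exists>A c. finite A \<and> (\<forall>\<gamma>. q \<gamma> = (\<Sum>\<alpha>\<in>A. c \<alpha> * monomial_fun \<alpha> \<gamma>))"
  then obtain A c where A: "finite A" and q: "\<And>\<gamma>. q \<gamma> = (\<Sum>\<alpha>\<in>A. c \<alpha> * monomial_fun \<alpha> \<gamma>)"
    by blast
  define c' where "c' \<alpha> = (if \<alpha> \<in> A then c \<alpha> else 0)" for \<alpha>
  have supp: "{\<alpha>. c' \<alpha> \<noteq> 0} \<subseteq> A" by (auto simp: c'_def)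
  have "q \<gamma> = (\<Sum>\<alpha>\<in>{\<alpha>. c' \<alpha> \<noteq> 0}. c' \<alpha> * monomial_fun \<alpha> \<gamma>)" for \<gamma>
  proof -
    have "q \<gamma> = (\<Sum>\<alpha>\<in>A. c' \<alpha> * monomial_fun \<alpha> \<gamma>)"
      unfolding q by (rule sum.cong) (auto simp: c'_def)
    also have "\<dots> = (\<Sum>\<alpha>\<in>{\<alpha>. c' \<alpha> \<noteq> 0}. c' \<alpha> * monomial_fun \<alpha> \<gamma>)"
      by (rule sum.mono_neutral_right[OF A supp]) auto
    finally show ?thesis .
  qed
  then show "mpoly_fun q"
    unfolding mpoly_fun_def monomial_fun_def using finite_subset[OF supp A] by blast
qed

lemma mpoly_fun_sum_monomials:
  fixes f :: "'b \<Rightarrow> 'a::comm_ring_1" and g :: "'b \<Rightarrow> ('l::finite \<Rightarrow> nat)"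
  assumes "finite X"
  shows "mpoly_fun (\<lambda>\<gamma>. \<Sum>x\<in>X. f x * monomial_fun (g x) \<gamma>)"
proof -
  have "(\<Sum>x\<in>X. f x * monomial_fun (g x) \<gamma>)
      = (\<Sum>\<alpha>\<in>g ` X. (\<Sum>x\<in>{x \<in> X. g x = \<alpha>}. f x) * monomial_fun \<alpha> \<gamma>)" for \<gamma>
    unfolding sum.image_gen[OF assms, of "\<lambda>x. f x * monomial_fun (g x) \<gamma>" g] sum_distrib_right
    by simp
  then show ?thesis
    unfolding mpoly_fun_iff using assms
    by (intro exI[of _ "g ` X"] exI[of _ "\<lambda>\<alpha>. \<Sum>x\<in>{x \<in> X. g x = \<alpha>}. f x"]) simp
qed

lemma mpoly_fun_const: "mpoly_fun (\<lambda>\<gamma>::'l::finite \<Rightarrow> 'a::comm_ring_1. a)"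
  unfolding mpoly_fun_iff
  by (intro exI[of _ "{\<lambda>_. 0}"] exI[of _ "\<lambda>_. a"]) (simp add: monomial_fun_def)

lemma mpoly_fun_var: "mpoly_fun (\<lambda>\<gamma>::'l::finite \<Rightarrow> 'a::comm_ring_1. \<gamma> k)"
proof -
  have "monomial_fun (\<lambda>l. if l = k then 1 else 0) \<gamma> = \<gamma> k" for \<gamma> :: "'l \<Rightarrow> 'a"
  proof -
    have "monomial_fun (\<lambda>l. if l = k then 1 else 0) \<gamma> = (\<Prod>l\<in>UNIV. if l = k then \<gamma> l else 1)"
      unfolding monomial_fun_def by (rule prod.cong) auto
    then show ?thesis by simp
  qed
  then show ?thesis
    unfolding mpoly_fun_iff
    by (intro exI[of _ "{\<lambda>l. if l = k then 1 else 0}"] exI[of _ "\<lambda>_. 1"]) simp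
qed

lemma mpoly_fun_add:
  assumes "mpoly_fun p" "mpoly_fun q"
  shows "mpoly_fun (\<lambda>\<gamma>. p \<gamma> + q \<gamma>)"
proof -
  obtain A c where A: "finite A" "\<And>\<gamma>. p \<gamma> = (\<Sum>\<alpha>\<in>A. c \<alpha> * monomial_fun \<alpha> \<gamma>)"
    using assms(1) unfolding mpoly_fun_iff by blast
  obtain B d where B: "finite B" "\<And>\<gamma>. q \<gamma> = (\<Sum>\<alpha>\<in>B. d \<alpha> * monomial_fun \<alpha> \<gamma>)"
    using assms(2) unfolding mpoly_fun_iff by blast
  have "mpoly_fun (\<lambda>\<gamma>. \<Sum>x\<in>A <+> B. case_sum c d x * monomial_fun (case_sum id id x) \<gamma>)"
    using A B by (intro mpoly_fun_sum_monomials) simp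
  then show ?thesis
    using A B by (simp add: sum.Plus)
qed

lemma mpoly_fun_mult:
  assumes "mpoly_fun p" "mpoly_fun q"
  shows "mpoly_fun (\<lambda>\<gamma>. p \<gamma> * q \<gamma>)"
proof -
  obtain A c where A: "finite A" "\<And>\<gamma>. p \<gamma> = (\<Sum>\<alpha>\<in>A. c \<alpha> * monomial_fun \<alpha> \<gamma>)"
    using assms(1) unfolding mpoly_fun_iff by blast
  obtain B d where B: "finite B" "\<And>\<gamma>. q \<gamma> = (\<Sum>\<alpha>\<in>B. d \<alpha> * monomial_fun \<alpha> \<gamma>)"
    using assms(2) unfolding mpoly_fun_iff by blast
  have "p \<gamma> * q \<gamma> = (\<Sum>(\<alpha>, \<beta>)\<in>A \<times> B. (c \<alpha> * d \<beta>) * monomial_fun (\<lambda>k. \<alpha> k + \<beta> k) \<gamma>)" for \<gamma>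
    unfolding A(2) B(2) sum_product sum.cartesian_product monomial_fun_add
    by (rule sum.cong) (auto simp: mult_ac)
  moreover have "mpoly_fun (\<lambda>\<gamma>. \<Sum>(\<alpha>, \<beta>)\<in>A \<times> B. (c \<alpha> * d \<beta>) * monomial_fun (\<lambda>k. \<alpha> k + \<beta> k) \<gamma>)"
    using mpoly_fun_sum_monomials[of "A \<times> B" "\<lambda>(\<alpha>, \<beta>). c \<alpha> * d \<beta>" "\<lambda>(\<alpha>, \<beta>) k. \<alpha> k + \<beta> k"] A B
    by (simp add: case_prod_beta')
  ultimately show ?thesis by simp
qed

lemma mpoly_fun_sum:
  assumes "finite I" "\<And>i. i \<in> I \<Longrightarrow> mpoly_fun (f i)"
  shows "mpoly_fun (\<lambda>\<gamma>. \<Sum>i\<in>I. f i \<gamma>)"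
  using assms by (induction I rule: finite_induct) (simp_all add: mpoly_fun_const mpoly_fun_add)

lemma mpoly_fun_prod:
  assumes "finite I" "\<And>i. i \<in> I \<Longrightarrow> mpoly_fun (f i)"
  shows "mpoly_fun (\<lambda>\<gamma>. \<Prod>i\<in>I. f i \<gamma>)"
  using assms by (induction I rule: finite_induct) (simp_all add: mpoly_fun_const mpoly_fun_mult)

lemma mpoly_fun_power:
  assumes "mpoly_fun p"
  shows "mpoly_fun (\<lambda>\<gamma>. p \<gamma> ^ n)"
  by (induction n) (simp_all add: mpoly_fun_const mpoly_fun_mult assms)

lemma mpoly_fun_linear_subst:
  fixes q :: "('l::finite \<Rightarrow> 'a::comm_ring_1) \<Rightarrow> 'a" and M :: "'l \<Rightarrow> 'm::finite \<Rightarrow> 'a"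
  assumes "mpoly_fun q"
  shows "mpoly_fun (\<lambda>\<gamma>. q (\<lambda>k. \<Sum>l\<in>UNIV. M k l * \<gamma> l))"
proof -
  obtain A c where A: "finite A" "\<And>\<gamma>. q \<gamma> = (\<Sum>\<alpha>\<in>A. c \<alpha> * monomial_fun \<alpha> \<gamma>)"
    using assms unfolding mpoly_fun_iff by blast
  have "mpoly_fun (\<lambda>\<gamma>::'m \<Rightarrow> 'a. \<Sum>\<alpha>\<in>A. c \<alpha> * (\<Prod>k\<in>UNIV. (\<Sum>l\<in>UNIV. M k l * \<gamma> l) ^ \<alpha> k))"
    using A(1)
    by (intro mpoly_fun_sum mpoly_fun_mult mpoly_fun_const mpoly_fun_prod mpoly_fun_power mpoly_fun_var)
      simp_all
  then show ?thesis
    unfolding A(2) monomial_fun_def .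
qed

lemma mpoly_fun_isCont_ray:
  fixes q :: "('l::finite \<Rightarrow> 'a::real_normed_field) \<Rightarrow> 'a"
  assumes "mpoly_fun q"
  shows "isCont (\<lambda>t. q (\<lambda>k. t * \<gamma> k)) t0"
proof -
  obtain A c where "\<And>\<gamma>. q \<gamma> = (\<Sum>\<alpha>\<in>A. c \<alpha> * monomial_fun \<alpha> \<gamma>)"
    using assms unfolding mpoly_fun_iff by blast
  then show ?thesis
    unfolding monomial_fun_def by (simp add: continuous_intros)
qed

lemma mpoly_fun_pencil_det: "mpoly_fun (pencil_det (T :: 'k::finite \<Rightarrow> 'a::comm_ring_1^'r::finite^'r))"
proof -
  have "pencil_det T = (\<lambda>\<gamma>. \<Sum>p\<in>{p. p permutes (UNIV::'r set)}. of_int (sign p) *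
      (\<Prod>a\<in>UNIV. \<Sum>k\<in>UNIV. \<gamma> k * T k $ a $ p a))"
    by (simp add: fun_eq_iff pencil_det_def det_def slice_mix_def)
  then show ?thesis
    by (simp add: finite_permutations mpoly_fun_sum mpoly_fun_mult mpoly_fun_const
        mpoly_fun_prod mpoly_fun_var)
qed

lemma pencil_det_scale:
  fixes T :: "'k::finite \<Rightarrow> 'a::comm_ring_1^'r::finite^'r"
  shows "pencil_det T (\<lambda>k. t * \<gamma> k) = t ^ CARD('r) * pencil_det T \<gamma>"
proof -
  have "slice_mix T (\<lambda>k. t * \<gamma> k) = (\<chi> a. t *s slice_mix T \<gamma> $ a)"
    by (simp add: slice_mix_def vec_eq_iff sum_distrib_left mult_ac)
  then show ?thesis
    unfolding pencil_det_def by (simp add: det_rows_mul)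
qed

lemma lin_pow_dvd_0: "lin_pow_dvd X l 0"
  unfolding lin_pow_dvd_def by (auto intro: mpoly_fun_pencil_det)

lemma lin_pow_dvd_mono:
  assumes "lin_pow_dvd X l m" "n \<le> m"
  shows "lin_pow_dvd X l n"
proof -
  obtain q where q: "mpoly_fun q" "\<And>\<gamma>. pencil_det X \<gamma> = (\<Sum>k\<in>UNIV. l k * \<gamma> k) ^ m * q \<gamma>"
    using assms(1) unfolding lin_pow_dvd_def by blast
  have "pencil_det X \<gamma> = (\<Sum>k\<in>UNIV. l k * \<gamma> k) ^ n *
      ((\<Sum>k\<in>UNIV. l k * \<gamma> k) ^ (m - n) * q \<gamma>)" for \<gamma>
    unfolding q(2) using assms(2) by (simp flip: mult.assoc power_add)
  moreover have "mpoly_fun (\<lambda>\<gamma>. (\<Sum>k\<in>UNIV. l k * \<gamma> k) ^ (m - n) * q \<gamma>)"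
    by (simp add: q(1) mpoly_fun_mult mpoly_fun_power mpoly_fun_sum mpoly_fun_const mpoly_fun_var)
  ultimately show ?thesis
    unfolding lin_pow_dvd_def by blast
qed

lemma lin_pow_dvd_if_pencil_det_zero:
  assumes "\<And>\<gamma>. pencil_det X \<gamma> = 0"
  shows "lin_pow_dvd X l n"
  unfolding lin_pow_dvd_def by (intro exI[of _ "\<lambda>_. 0"]) (simp add: assms mpoly_fun_const)

lemma lin_pow_dvd_le_card:
  fixes T :: "'k::finite \<Rightarrow> 'a::real_normed_field^'r::finite^'r"
  assumes "slice_mix_invertible T" "lin_pow_dvd T l n"
  shows "n \<le> CARD('r)"
proof (rule ccontr)
  assume "\<not> n \<le> CARD('r)"
  then obtain e where n: "n = CARD('r) + Suc e"
    by (metis add_Suc_right less_imp_Suc_add not_le)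
  obtain \<gamma>0 where "invertible (slice_mix T \<gamma>0)"
    using assms(1) unfolding slice_mix_invertible_def by blast
  then have d_nz: "pencil_det T \<gamma>0 \<noteq> 0"
    by (simp add: pencil_det_def invertible_det_nz)
  obtain q where q: "mpoly_fun q" "\<And>\<gamma>. pencil_det T \<gamma> = (\<Sum>k\<in>UNIV. l k * \<gamma> k) ^ n * q \<gamma>"
    using assms(2) unfolding lin_pow_dvd_def by blast
  define c where "c = (\<Sum>k\<in>UNIV. l k * \<gamma>0 k)"
  define g where "g t = t ^ Suc e * c ^ n * q (\<lambda>k. t * \<gamma>0 k)" for t
  have "g t = pencil_det T \<gamma>0" if "t \<noteq> 0" for t
  proof -
    have "t ^ CARD('r) * pencil_det T \<gamma>0 = pencil_det T (\<lambda>k. t * \<gamma>0 k)"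
      by (rule pencil_det_scale[symmetric])
    also have "\<dots> = (t * c) ^ n * q (\<lambda>k. t * \<gamma>0 k)"
      by (simp add: q(2) c_def sum_distrib_left mult_ac)
    finally have "t ^ CARD('r) * pencil_det T \<gamma>0 = (t * c) ^ n * q (\<lambda>k. t * \<gamma>0 k)" .
    then have "t ^ CARD('r) * pencil_det T \<gamma>0 = t ^ CARD('r) * g t"
      unfolding g_def n by (simp add: power_add power_mult_distrib mult_ac)
    with that show ?thesis
      by simp
  qed
  then have "\<forall>\<^sub>F t in at 0. g t = pencil_det T \<gamma>0"
    by (simp add: eventually_at_filter)
  then have "(g \<longlongrightarrow> pencil_det T \<gamma>0) (at 0)"
    by (rule tendsto_eventually)
  moreover have "isCont g 0"
    unfolding g_def by (intro continuous_intros mpoly_fun_isCont_ray q(1))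
  ultimately have "pencil_det T \<gamma>0 = g 0"
    using tendsto_unique[OF at_neq_bot] isContD by blast
  with d_nz show False
    by (simp add: g_def)
qed

lemma lin_pow_dvd_alg_mult:
  fixes T :: "'k::finite \<Rightarrow> 'a::real_normed_field^'r::finite^'r"
  assumes "slice_mix_invertible T"
  shows "lin_pow_dvd T l (alg_mult T l)"
  unfolding alg_mult_def
  using lin_pow_dvd_0 lin_pow_dvd_le_card[OF assms] by (rule GreatestI_nat)

lemma lin_pow_dvd_linear_subst:
  fixes X :: "'k::finite \<Rightarrow> 'a::comm_ring_1^'r::finite^'r" and Y :: "'l::finite \<Rightarrow> 'a^'r^'r"
  assumes "lin_pow_dvd X l m"
    and "\<And>\<gamma>. slice_mix Y \<gamma> = slice_mix X (\<lambda>k. \<Sum>b\<in>UNIV. M k b * \<gamma> b)"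
  shows "lin_pow_dvd Y (\<lambda>b. \<Sum>k\<in>UNIV. l k * M k b) m"
proof -
  obtain q where q: "mpoly_fun q" "\<And>\<gamma>. pencil_det X \<gamma> = (\<Sum>k\<in>UNIV. l k * \<gamma> k) ^ m * q \<gamma>"
    using assms(1) unfolding lin_pow_dvd_def by blast
  have "(\<Sum>k\<in>UNIV. l k * (\<Sum>b\<in>UNIV. M k b * \<gamma> b)) = (\<Sum>b\<in>UNIV. (\<Sum>k\<in>UNIV. l k * M k b) * \<gamma> b)"
    for \<gamma>
  proof -
    have "(\<Sum>k\<in>UNIV. l k * (\<Sum>b\<in>UNIV. M k b * \<gamma> b)) = (\<Sum>k\<in>UNIV. \<Sum>b\<in>UNIV. l k * M k b * \<gamma> b)"
      by (simp add: sum_distrib_left mult.assoc)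
    also have "\<dots> = (\<Sum>b\<in>UNIV. \<Sum>k\<in>UNIV. l k * M k b * \<gamma> b)"
      by (rule sum.swap)
    finally show ?thesis
      by (simp add: sum_distrib_right)
  qed
  then have "pencil_det Y \<gamma> = (\<Sum>b\<in>UNIV. (\<Sum>k\<in>UNIV. l k * M k b) * \<gamma> b) ^ m *
      q (\<lambda>k. \<Sum>b\<in>UNIV. M k b * \<gamma> b)" for \<gamma>
    by (simp add: pencil_det_def assms(2) q(2)[unfolded pencil_det_def])
  then show ?thesis
    unfolding lin_pow_dvd_def using mpoly_fun_linear_subst[OF q(1)] by blast
qed

lemma slice_mix_subpencil_mode3:
  "slice_mix (subpencil (mode3 T U) i j) \<gamma>
     = slice_mix T (\<lambda>l. \<Sum>b\<in>UNIV. U $ (if b then i else j) $ l * \<gamma> b)"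
  unfolding slice_mix_def subpencil_def mode3_def
  by (simp add: vec_eq_iff UNIV_bool sum_distrib_left sum.distrib distrib_left mult_ac)

theorem proposition5p1:
  fixes T :: "'k::finite \<Rightarrow> 'a::real_normed_field^'r::finite^'r"
    and U :: "'a^'k^'k"
    and lam :: "'k \<Rightarrow> 'a"
    and m :: nat and i j :: 'k
  assumes "slice_mix_invertible T"
    and "invertible U"
    and "is_JGE_value T lam" and "alg_mult T lam = m"
    and "i \<noteq> j"
  shows "\<exists>\<mu> :: bool \<Rightarrow> 'a. \<mu> \<noteq> (\<lambda>_. 0) \<and> lin_pow_dvd (subpencil (mode3 T U) i j) \<mu> 1
           \<and> lin_pow_dvd (subpencil (mode3 T U) i j) \<mu> m"
proof -
  let ?S = "subpencil (mode3 T U) i j"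
  define \<mu> where "\<mu> b = (\<Sum>l\<in>UNIV. lam l * U $ (if b then i else j) $ l)" for b
  have m_pos: "m > 0"
    using assms(3,4) unfolding is_JGE_value_def by simp
  have "lin_pow_dvd T lam m"
    using lin_pow_dvd_alg_mult[OF assms(1), of lam] unfolding assms(4) .
  then have S_dvd: "lin_pow_dvd ?S \<mu> m"
    unfolding \<mu>_def by (rule lin_pow_dvd_linear_subst) (rule slice_mix_subpencil_mode3)
  show ?thesis
  proof (cases "\<mu> = (\<lambda>_. 0)")
    case False
    with S_dvd lin_pow_dvd_mono[OF S_dvd, of 1] m_pos show ?thesis
      by auto
  next
    case True
    have "pencil_det ?S \<gamma> = 0" for \<gamma>
      using S_dvd m_pos unfolding lin_pow_dvd_def True by auto
    then show ?thesis
      by (intro exI[of _ "\<lambda>_. 1"]) (auto simp: fun_eq_iff intro: lin_pow_dvd_if_pencil_det_zero)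
  qed
qed

end
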